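(* Let $d$ be a positive integer and let $l,m>90d$ be integers such that $lm$ is even. There is a directed Hamiltonian cycle $c_{l,m}$ on the rectangle $[1,l]\times[1,m]\subseteq\mathbb{Z}^2$ (with adjacency given by unit vectors) with the following features: (1) the cycle traverses, in the clockwise direction, all the edges of the boundary of the rectangle except one; (2) every edge of the cycle at distance greater than $4$ from the boundary of the rectangle is traversed in the direction $\epsilon^1$ if it lies at even distance from the top row $[1,l]\times\{m\}$, and in the direction $-\epsilon^1$ if it lies at odd distance from the top row.
   Context: A directed Hamiltonian cycle on a finite set $V\subseteq\mathbb{Z}^2$ is a cyclic ordering of all vertices of $V$ in which consecutive vertices differ by a unit vector $\pm\epsilon^1,\pm\epsilon^2$, with edges directed from each vertex to its successor. $\epsilon^1=(1,0)$, $\epsilon^2=(0,1)$; "clockwise" refers to the standard orientation of the plane with $\epsilon^2$ pointing up, and the boundary of the rectangle is the cycle formed by its outermost vertices. *)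

theory Defs
  imports Main
begin

type_synonym pt = "int \<times> int"

definition rect :: "int \<Rightarrow> int \<Rightarrow> pt set" where
  "rect l m = {1..l} \<times> {1..m}"

definition unit_adj :: "pt \<Rightarrow> pt \<Rightarrow> bool" where
  "unit_adj p q \<longleftrightarrow> \<bar>fst p - fst q\<bar> + \<bar>snd p - snd q\<bar> = 1"

definition is_dir_ham_cycle :: "pt set \<Rightarrow> (nat \<Rightarrow> pt) \<Rightarrow> nat \<Rightarrow> bool" where
  "is_dir_ham_cycle V c n \<longleftrightarrow>
     finite V \<and> n = card V \<and> bij_betw c {..<n} V \<and>
     (\<forall>i<n. unit_adj (c i) (c (Suc i mod n)))"

definition cycle_edges :: "(nat \<Rightarrow> pt) \<Rightarrow> nat \<Rightarrow> (pt \<times> pt) set" where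
  "cycle_edges c n = {(c i, c (Suc i mod n)) | i. i < n}"

text \<open>Edges of the boundary of the rectangle, oriented clockwise
  (e2 pointing up: rightwards along the top row, down the right column,
  leftwards along the bottom row, up the left column).\<close>
definition cw_boundary_edges :: "int \<Rightarrow> int \<Rightarrow> (pt \<times> pt) set" where
  "cw_boundary_edges l m =
     {((x, m), (x + 1, m)) | x. 1 \<le> x \<and> x < l} \<union>
     {((l, y), (l, y - 1)) | y. 1 < y \<and> y \<le> m} \<union>
     {((x, 1), (x - 1, 1)) | x. 1 < x \<and> x \<le> l} \<union>
     {((1, y), (1, y + 1)) | y. 1 \<le> y \<and> y < m}"

definition bdist :: "int \<Rightarrow> int \<Rightarrow> pt \<Rightarrow> int" where
  "bdist l m p = min (min (fst p - 1) (l - fst p)) (min (snd p - 1) (m - snd p))"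

end

theory Submission
  imports Defs
begin

(* The cycle is written down as an explicit list of lattice points. Starting at (1, m - 1), it runs
   clockwise around the whole boundary to (1, m - 2), so the only boundary edge it misses is
   (1, m - 2) -> (1, m - 1). It then steps in to (2, m - 2), descends column 2 and sweeps the block
   [3, l - 1] x [2, m - 1] row by row, rightwards in the rows at even distance from the top and
   leftwards in the others, and returns to (1, m - 1) via (3, m - 1) and (2, m - 1). For this the
   sweep must cover an even number of rows; when m is odd, l is even, and rows 2 and 3 are first
   covered column by column by a vertical zigzag that ends at the top of column l - 1.
   All required properties are conditions on consecutive points (tour_step), except that a boundary
   edge is actually used; this holds because every boundary point is visited and its successor is
   forced. *)

lemma hd_upto: "a \<le> b \<Longrightarrow> hd [a..b] = a"
  by (simp add: upto_rec1)

lemma last_upto: "a \<le> b \<Longrightarrow> last [a..b] = b"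
  by (subst upto_rec2) simp_all

lemma successively_upto:
  "successively P [a..b] \<longleftrightarrow> (\<forall>x\<in>{a..<b}. P x (x + 1))"
proof (induction "nat (b - a)" arbitrary: a)
  case 0
  then show ?case by (cases "a = b") auto
next
  case (Suc k)
  then have "a + 1 \<le> b" by linarith
  then have "[a..b] = a # [a + 1..b]" "{a..<b} = insert a {a + 1..<b}"
    by (auto simp: upto_rec1)
  with Suc.hyps \<open>a + 1 \<le> b\<close> show ?case
    by (simp add: successively_Cons hd_upto)
qed

lemma last_concat: "\<lbrakk>xss \<noteq> []; last xss \<noteq> []\<rbrakk> \<Longrightarrow> last (concat xss) = last (last xss)"
  by (induction xss) (auto simp: last_append)

lemma successively_concat:
  assumes "\<forall>xs \<in> set xss. xs \<noteq> []"
  shows "successively P (concat xss) \<longleftrightarrow>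
    (\<forall>xs \<in> set xss. successively P xs) \<and> successively (\<lambda>xs ys. P (last xs) (hd ys)) xss"
  using assms
proof (induction xss)
  case (Cons xs xss)
  then show ?case
    by (cases xss) (auto simp: successively_append_iff successively_Cons hd_concat)
qed simp

lemma concat_map_upto_ends:
  assumes "\<And>x. g x \<noteq> []" and "a \<le> b"
  shows "concat (map g [a..b]) \<noteq> [] \<and> hd (concat (map g [a..b])) = hd (g a) \<and>
    last (concat (map g [a..b])) = last (g b)"
  using assms by (force simp: hd_concat last_concat hd_map last_map hd_upto last_upto)

lemma cycle_edge_if_successively_closed:
  assumes "successively P (xs @ [hd xs])" and "(p, q) \<in> cycle_edges ((!) xs) (length xs)"
  shows "P p q"
proof -
  obtain i where i: "i < length xs" and pq: "p = xs ! i" "q = xs ! (Suc i mod length xs)"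
    using assms(2) by (auto simp: cycle_edges_def)
  have "(xs @ [hd xs]) ! Suc i = xs ! (Suc i mod length xs)"
  proof (cases "Suc i < length xs")
    case False
    then have "Suc i = length xs" using i by simp
    moreover have "xs \<noteq> []" using i by auto
    ultimately show ?thesis by (simp add: nth_append hd_conv_nth)
  qed (simp add: nth_append)
  moreover have "(xs @ [hd xs]) ! i = xs ! i" using i by (simp add: nth_append)
  ultimately show ?thesis
    using successively_nth[OF assms(1), of i] i pq by simp
qed

lemma cycle_edge_from_vertex:
  assumes "v \<in> set xs"
  shows "\<exists>q. (v, q) \<in> cycle_edges ((!) xs) (length xs)"
  using assms unfolding cycle_edges_def in_set_conv_nth by blast

lemma is_dir_ham_cycle_if_successively_closed:
  assumes "distinct xs" and "set xs = V" and "successively unit_adj (xs @ [hd xs])"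
  shows "is_dir_ham_cycle V ((!) xs) (length xs)"
  unfolding is_dir_ham_cycle_def
proof (intro conjI allI impI)
  show "bij_betw ((!) xs) {..<length xs} V"
    using assms by (intro bij_betw_nth) auto
  fix i assume "i < length xs"
  then have "(xs ! i, xs ! (Suc i mod length xs)) \<in> cycle_edges ((!) xs) (length xs)"
    by (auto simp: cycle_edges_def)
  then show "unit_adj (xs ! i) (xs ! (Suc i mod length xs))"
    using cycle_edge_if_successively_closed[OF assms(3)] by blast
qed (use assms distinct_card in force)+

lemma cw_boundary_edgesI:
  "\<lbrakk>1 \<le> x; x < l\<rbrakk> \<Longrightarrow> ((x, m), (x + 1, m)) \<in> cw_boundary_edges l m"
  "\<lbrakk>1 \<le> y; y < m\<rbrakk> \<Longrightarrow> ((l, y + 1), (l, y)) \<in> cw_boundary_edges l m"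
  "\<lbrakk>1 \<le> x; x < l\<rbrakk> \<Longrightarrow> ((x + 1, 1), (x, 1)) \<in> cw_boundary_edges l m"
  "\<lbrakk>1 \<le> y; y < m\<rbrakk> \<Longrightarrow> ((1, y), (1, y + 1)) \<in> cw_boundary_edges l m"
  unfolding cw_boundary_edges_def by force+

lemma cw_boundary_edge_source:
  assumes "1 \<le> l" and "1 \<le> m" and "(p, q) \<in> cw_boundary_edges l m"
  shows "p \<in> rect l m \<and> (fst p \<in> {1, l} \<or> snd p \<in> {1, m})"
  using assms by (auto simp: cw_boundary_edges_def rect_def)

lemma cw_boundary_edge_unique:
  assumes "2 \<le> l" and "2 \<le> m"
    and "(p, q) \<in> cw_boundary_edges l m" and "(p, q') \<in> cw_boundary_edges l m"
  shows "q = q'"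
  using assms by (auto simp: cw_boundary_edges_def)

lemma card_rect:
  assumes "0 \<le> l" and "0 \<le> m"
  shows "card (rect l m) = nat (l * m)"
  using assms by (simp add: rect_def card_cartesian_product nat_mult_distrib)

definition tour_step :: "int \<Rightarrow> int \<Rightarrow> pt \<Rightarrow> pt \<Rightarrow> bool" where
  "tour_step l m p q \<longleftrightarrow> unit_adj p q \<and>
     (fst p \<in> {1, l} \<or> snd p \<in> {1, m} \<longrightarrow>
        (if p = (1, m - 2) then q = (2, m - 2) else (p, q) \<in> cw_boundary_edges l m)) \<and>
     (4 < bdist l m p \<and> 4 < bdist l m q \<longrightarrow>
        q = (if even (m - snd p) then (fst p + 1, snd p) else (fst p - 1, snd p)))"

lemma tour_step_cw_boundary_edge:
  assumes "(p, q) \<in> cw_boundary_edges l m" and "p \<noteq> (1, m - 2)"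
  shows "tour_step l m p q"
  using assms unfolding tour_step_def cw_boundary_edges_def unit_adj_def bdist_def by auto

lemma cw_boundary_edge_in_cycle_iff:
  assumes "2 \<le> l" and "3 \<le> m" and "set xs = rect l m"
    and walk: "successively (tour_step l m) (xs @ [hd xs])"
    and e: "e \<in> cw_boundary_edges l m"
  shows "e \<in> cycle_edges ((!) xs) (length xs) \<longleftrightarrow> e \<noteq> ((1, m - 2), (1, m - 1))"
proof
  assume "e \<in> cycle_edges ((!) xs) (length xs)"
  then have "tour_step l m (fst e) (snd e)"
    using cycle_edge_if_successively_closed[OF walk] by (metis prod.collapse)
  then show "e \<noteq> ((1, m - 2), (1, m - 1))"
    by (auto simp: tour_step_def)
next
  assume not_exit: "e \<noteq> ((1, m - 2), (1, m - 1))"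
  obtain p q where pq: "e = (p, q)"
    by (cases e)
  have exit_edge: "((1, m - 2), (1, m - 1)) \<in> cw_boundary_edges l m"
    using cw_boundary_edgesI(4)[of "m - 2" m l] assms(2) by simp
  have p: "p \<in> set xs" "fst p \<in> {1, l} \<or> snd p \<in> {1, m}"
    using cw_boundary_edge_source[of l m p q] assms pq by auto
  obtain q' where q': "(p, q') \<in> cycle_edges ((!) xs) (length xs)"
    using cycle_edge_from_vertex[OF p(1)] by blast
  have "p \<noteq> (1, m - 2)"
    using cw_boundary_edge_unique[OF assms(1) _ _ exit_edge, of q] assms(2) e not_exit pq by auto
  then have "(p, q') \<in> cw_boundary_edges l m"
    using cycle_edge_if_successively_closed[OF walk q'] p(2) by (auto simp: tour_step_def)
  then have "q' = q"
    using cw_boundary_edge_unique[of l m p q' q] assms e pq by simp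
  then show "e \<in> cycle_edges ((!) xs) (length xs)"
    using q' pq by simp
qed

definition boundary_walk :: "int \<Rightarrow> int \<Rightarrow> pt list" where
  "boundary_walk l m = (1, m - 1) # map (\<lambda>x. (x, m)) [1..l] @ map (\<lambda>y. (l, y)) (rev [1..m - 1]) @
     map (\<lambda>x. (x, 1)) (rev [1..l - 1]) @ map (\<lambda>y. (1, y)) [2..m - 2]"

definition inner_column :: "int \<Rightarrow> pt list" where
  "inner_column m = map (\<lambda>y. (2, y)) (rev [2..m - 2])"

definition zigzag_column :: "int \<Rightarrow> pt list" where
  "zigzag_column x = map (\<lambda>y. (x, y)) (if odd x then [2, 3] else [3, 2])"

definition zigzag :: "int \<Rightarrow> int \<Rightarrow> pt list" where
  "zigzag l m = (if even m then [] else concat (map zigzag_column [3..l - 1]))"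

definition sweep_row :: "int \<Rightarrow> int \<Rightarrow> int \<Rightarrow> pt list" where
  "sweep_row l m y = map (\<lambda>x. (x, y)) (if even (m - y) then [3..l - 1] else rev [3..l - 1])"

definition sweep :: "int \<Rightarrow> int \<Rightarrow> pt list" where
  "sweep l m = concat (map (sweep_row l m) [if even m then 2 else 4..m - 1])"

definition tour :: "int \<Rightarrow> int \<Rightarrow> pt list" where
  "tour l m = boundary_walk l m @ inner_column m @ zigzag l m @ sweep l m @ [(2, m - 1)]"

lemma successively_tour_step_boundary_walk:
  assumes "4 \<le> l" and "4 \<le> m"
  shows "successively (tour_step l m) (boundary_walk l m)"
proof -
  have corners: "((1, m - 1), (1, m)) \<in> cw_boundary_edges l m"
    "((l, m), (l, m - 1)) \<in> cw_boundary_edges l m"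
    "((l, 1), (l - 1, 1)) \<in> cw_boundary_edges l m"
    "((1, 1), (1, 2)) \<in> cw_boundary_edges l m"
    using assms cw_boundary_edgesI[of "m - 1" m l] cw_boundary_edgesI[of 1 m l]
      cw_boundary_edgesI[of "l - 1" l m] by simp_all
  have "successively (\<lambda>p q. (p, q) \<in> cw_boundary_edges l m \<and> p \<noteq> (1, m - 2)) (boundary_walk l m)"
    using assms corners unfolding boundary_walk_def
    by (simp add: successively_Cons successively_append_iff successively_map successively_upto
        hd_map last_map hd_upto last_upto hd_rev last_rev cw_boundary_edgesI)
  then show ?thesis
    by (rule successively_mono) (auto intro: tour_step_cw_boundary_edge)
qed

lemma successively_tour_step_inner_column:
  assumes "4 \<le> l" and "4 \<le> m"
  shows "successively (tour_step l m) (inner_column m)"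
  using assms unfolding inner_column_def
  by (simp add: successively_map successively_upto tour_step_def unit_adj_def bdist_def)

lemma successively_tour_step_zigzag:
  assumes "4 \<le> l" and "4 \<le> m"
  shows "successively (tour_step l m) (zigzag l m)"
proof -
  have "zigzag_column x \<noteq> []" for x
    by (simp add: zigzag_column_def)
  then show ?thesis
    using assms unfolding zigzag_def
    by (simp add: successively_concat successively_map successively_upto zigzag_column_def
        tour_step_def unit_adj_def bdist_def)
qed

lemma sweep_row_nonempty: "4 \<le> l \<Longrightarrow> sweep_row l m y \<noteq> []"
  by (simp add: sweep_row_def)

lemma hd_sweep_row: "4 \<le> l \<Longrightarrow> hd (sweep_row l m y) = (if even (m - y) then (3, y) else (l - 1, y))"
  by (simp add: sweep_row_def hd_map hd_upto hd_rev last_upto)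

lemma last_sweep_row: "4 \<le> l \<Longrightarrow> last (sweep_row l m y) = (if even (m - y) then (l - 1, y) else (3, y))"
  by (simp add: sweep_row_def last_map hd_upto last_rev last_upto)

lemma successively_tour_step_sweep:
  assumes "4 \<le> l" and "4 \<le> m"
  shows "successively (tour_step l m) (sweep l m)"
proof -
  have "successively (tour_step l m) (sweep_row l m y)" if "1 < y" and "y < m" for y
    using assms that by (simp add: sweep_row_def successively_map successively_upto
        tour_step_def unit_adj_def bdist_def)
  moreover have "tour_step l m (last (sweep_row l m y)) (hd (sweep_row l m (y + 1)))"
    if "2 \<le> y" and "y < m - 1" for y
    using assms that by (simp add: hd_sweep_row last_sweep_row tour_step_def unit_adj_def bdist_def)
  ultimately show ?thesis
    using assms unfolding sweep_def
    by (simp add: successively_concat sweep_row_nonempty successively_map successively_upto)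
qed

lemma boundary_walk_ends:
  assumes "4 \<le> l" and "4 \<le> m"
  shows "hd (boundary_walk l m) = (1, m - 1) \<and> last (boundary_walk l m) = (1, m - 2)"
  using assms by (simp add: boundary_walk_def last_map last_upto)

lemma inner_column_ends:
  assumes "4 \<le> m"
  shows "inner_column m \<noteq> [] \<and> hd (inner_column m) = (2, m - 2) \<and> last (inner_column m) = (2, 2)"
  using assms by (simp add: inner_column_def hd_map last_map hd_rev last_rev hd_upto last_upto)

lemma zigzag_ends:
  assumes "4 \<le> l" and "even l" and "odd m"
  shows "zigzag l m \<noteq> [] \<and> hd (zigzag l m) = (3, 2) \<and> last (zigzag l m) = (l - 1, 3)"
proof -
  have "zigzag_column x \<noteq> []" for x
    by (simp add: zigzag_column_def)
  from concat_map_upto_ends[of zigzag_column, OF this, of 3 "l - 1"] show ?thesis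
    using assms by (simp add: zigzag_def zigzag_column_def)
qed

lemma sweep_ends:
  assumes "4 \<le> l" and "4 \<le> m"
  shows "sweep l m \<noteq> [] \<and> hd (sweep l m) = (if even m then (3, 2) else (l - 1, 4)) \<and>
    last (sweep l m) = (3, m - 1)"
proof -
  have "if even m then 2 \<le> m - 1 else 4 \<le> m - 1"
    using assms by presburger
  then show ?thesis
    using concat_map_upto_ends[of "sweep_row l m", OF sweep_row_nonempty[OF assms(1)]]
    by (cases "even m") (simp_all add: sweep_def hd_sweep_row[OF assms(1)] last_sweep_row[OF assms(1)])
qed

lemma successively_tour_step_tour:
  assumes "4 \<le> l" and "4 \<le> m" and "even (l * m)"
  shows "successively (tour_step l m) (tour l m @ [hd (tour l m)])"
proof -
  have junctions: "tour_step l m (1, m - 2) (2, m - 2)" "tour_step l m (2, 2) (3, 2)"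
    "tour_step l m (l - 1, 3) (l - 1, 4)" "tour_step l m (3, m - 1) (2, m - 1)"
    "tour_step l m (2, m - 1) (1, m - 1)"
    using assms by (auto simp: tour_step_def unit_adj_def bdist_def)
  moreover have "even m \<Longrightarrow> zigzag l m = []" and "odd m \<Longrightarrow> even l"
    using assms(3) by (simp_all add: zigzag_def)
  moreover have "boundary_walk l m \<noteq> []"
    by (simp add: boundary_walk_def)
  ultimately show ?thesis
    using assms zigzag_ends[of l m] sweep_ends[of l m] boundary_walk_ends[of l m] inner_column_ends[of m]
      successively_tour_step_boundary_walk[of l m] successively_tour_step_inner_column[of l m]
      successively_tour_step_zigzag[of l m] successively_tour_step_sweep[of l m]
    unfolding tour_def
    by (cases "even m") (simp_all add: successively_append_iff)
qed

lemma set_boundary_walk: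
  assumes "4 \<le> l" and "4 \<le> m"
  shows "set (boundary_walk l m) = {1..l} \<times> {1, m} \<union> {1, l} \<times> {1..m}"
  using assms by (auto simp: boundary_walk_def image_iff)

lemma set_zigzag: "set (zigzag l m) = (if even m then {} else {3..l - 1} \<times> {2, 3})"
  by (auto simp: zigzag_def zigzag_column_def split: if_splits)

lemma set_sweep: "set (sweep l m) = {3..l - 1} \<times> {if even m then 2 else 4..m - 1}"
  by (auto simp: sweep_def sweep_row_def split: if_splits)

lemma set_tour:
  assumes "4 \<le> l" and "4 \<le> m"
  shows "set (tour l m) = rect l m"
proof
  show "set (tour l m) \<subseteq> rect l m"
    using assms by (auto simp: tour_def set_boundary_walk inner_column_def set_zigzag set_sweep rect_def
        split: if_splits)
next
  show "rect l m \<subseteq> set (tour l m)"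
  proof
    fix p assume "p \<in> rect l m"
    then obtain x y where p: "p = (x, y)" "1 \<le> x" "x \<le> l" "1 \<le> y" "y \<le> m"
      by (auto simp: rect_def)
    consider "x \<in> {1, l} \<or> y \<in> {1, m}" | "x = 2" "y \<le> m - 2" | "x = 2" "y = m - 1"
      | "3 \<le> x" "x < l" "1 < y" "y < m"
      using p by fastforce
    then show "p \<in> set (tour l m)"
    proof cases
      case 4
      then show ?thesis
        using p by (cases "even m"; cases "y \<le> 3") (auto simp: tour_def set_zigzag set_sweep)
    qed (use assms p in \<open>auto simp: tour_def set_boundary_walk inner_column_def\<close>)
  qed
qed

lemma length_zigzag:
  assumes "4 \<le> l"
  shows "int (length (zigzag l m)) = (if even m then 0 else 2 * (l - 3))"
proof -
  have "length (zigzag_column x) = 2" for x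
    by (simp add: zigzag_column_def)
  then show ?thesis
    using assms by (simp add: zigzag_def length_concat comp_def sum_list_triv)
qed

lemma length_sweep:
  assumes "4 \<le> l" and "4 \<le> m"
  shows "int (length (sweep l m)) = (if even m then m - 2 else m - 4) * (l - 3)"
proof -
  have "length (sweep_row l m y) = nat (l - 3)" for y
    by (simp add: sweep_row_def)
  then show ?thesis
    using assms by (simp add: sweep_def length_concat comp_def sum_list_triv)
qed

lemma length_tour:
  assumes "4 \<le> l" and "4 \<le> m"
  shows "int (length (tour l m)) = l * m"
proof -
  have "int (length (boundary_walk l m)) = 2 * l + 2 * m - 4"
    using assms by (simp add: boundary_walk_def)
  moreover have "int (length (inner_column m)) = m - 3"
    using assms by (simp add: inner_column_def)
  ultimately show ?thesis
    using length_zigzag[OF assms(1), of m] length_sweep[OF assms]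
    by (cases "even m") (simp_all add: tour_def algebra_simps)
qed

theorem lemma12p3:
  fixes d l m :: int
  assumes "d > 0" and "l > 90 * d" and "m > 90 * d" and "even (l * m)"
  shows "\<exists>c. is_dir_ham_cycle (rect l m) c (nat (l * m)) \<and>
     (\<exists>e0 \<in> cw_boundary_edges l m. \<forall>e \<in> cw_boundary_edges l m.
        e \<in> cycle_edges c (nat (l * m)) \<longleftrightarrow> e \<noteq> e0) \<and>
     (\<forall>p q. (p, q) \<in> cycle_edges c (nat (l * m)) \<and> bdist l m p > 4 \<and> bdist l m q > 4 \<longrightarrow>
        q = (if even (m - snd p) then (fst p + 1, snd p) else (fst p - 1, snd p)))"
proof -
  have l: "4 \<le> l" and m: "4 \<le> m"
    using assms by linarith+
  define xs where "xs = tour l m"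
  have length: "nat (l * m) = length xs"
    using length_tour[OF l m] unfolding xs_def by linarith
  have set: "set xs = rect l m"
    unfolding xs_def using set_tour[OF l m] .
  have walk: "successively (tour_step l m) (xs @ [hd xs])"
    unfolding xs_def using successively_tour_step_tour[OF l m assms(4)] .
  have "distinct xs"
    using card_rect[of l m] l m set length by (intro card_distinct) simp
  moreover have "successively unit_adj (xs @ [hd xs])"
    using walk by (rule successively_mono) (simp add: tour_step_def)
  ultimately have ham: "is_dir_ham_cycle (rect l m) ((!) xs) (length xs)"
    using set by (blast intro: is_dir_ham_cycle_if_successively_closed)
  show ?thesis
    unfolding length
  proof (intro exI[of _ "(!) xs"] conjI bexI[of _ "((1, m - 2), (1, m - 1))"] ballI allI impI)
    show "((1, m - 2), (1, m - 1)) \<in> cw_boundary_edges l m"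
      using cw_boundary_edgesI(4)[of "m - 2" m l] m by simp
    show "e \<in> cycle_edges ((!) xs) (length xs) \<longleftrightarrow> e \<noteq> ((1, m - 2), (1, m - 1))"
      if "e \<in> cw_boundary_edges l m" for e
      using cw_boundary_edge_in_cycle_iff[OF _ _ set walk that] l m by simp
    fix p q
    assume "(p, q) \<in> cycle_edges ((!) xs) (length xs) \<and> 4 < bdist l m p \<and> 4 < bdist l m q"
    then show "q = (if even (m - snd p) then (fst p + 1, snd p) else (fst p - 1, snd p))"
      using cycle_edge_if_successively_closed[OF walk, of p q] by (simp add: tour_step_def)
  qed (rule ham)
qed

end
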